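(* Let $q\in(0,1]$, $\eta\in(0,1]$, $R_0^*>0$, $m_1>0$, and suppose $G_T$ is deterministic. Assume [A12]: (i) for every $T\in\mathbb T$, $\mathbb H_T$ is almost surely thrice differentiable in $\theta$ on $B^*=\{\theta\in\Theta:|\theta-\theta^*|<R_0^*\}$; (ii) $\sup_{T\in\mathbb T}E[\|a_T\|^{m_1}|\partial_\theta\mathbb H_T(\theta^* )|^{m_1}]<\infty$; (iii) $\sup_{T\in\mathbb T}E[\|a_T\|^{2m_1}\sup_{\theta\in B^*}|\partial_\theta^2\mathbb H_T(\theta)|^{m_1}]<\infty$; (iv) $\sup_{T\in\mathbb T}E[\|a_T\|^{2m_1}\sup_{\theta\in B^*}|\partial_\theta^3\mathbb H_T(\theta)|^{m_1}]<\infty$. Then there exist constants $R_0>0$ and $K>0$ such that $$c_T(m_1,R_0)\le K\bigl(\|a_T\|^{-\eta(2-q)}\|G_T^{(00)}\|^{q}\bigr)^{m_1}$$ for every $T\in\mathbb T$ with $\|a_T\|\le1$.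
   Context: Let $\Theta\subset\mathbb R^{\mathsf p}$ be a bounded open set with closure $\overline\Theta$ and $\theta^*\in\Theta$. Let $(\Omega,\mathcal F,P)$ be a probability space, $\mathbb T\subset\mathbb R_{\ge0}$ with $\sup\mathbb T=\infty$. For each $T\in\mathbb T$, $\mathbb H_T:\Omega\times\overline\Theta\to\mathbb R$ is a random field continuous in $\theta$ for every $\omega$; $\partial_\theta^k\mathbb H_T$ denotes its $k$-th derivative tensor. Penalty weights $\xi_T^j>0$, $j=1,\dots,\mathsf p$, are given. $\mathcal J^{(0)}=\{j:\theta^*_j=0\}$, $\mathcal J^{(1)}=\{j:\theta^*_j\ne0\}$; $A^{(00)}=(A_{ij})_{i,j\in\mathcal J^{(0)}}$. $a_T=\mathrm{diag}(\alpha_T^1,\dots,\alpha_T^{\mathsf p})$ is deterministic, invertible, with $\|a_T\|\to0$ ($\|\cdot\|$ spectral norm); $\mathbb U_T=\{u:\theta^*+a_Tu\in\overline\Theta\}$. $\tilde a_T$ is diagonal with $(\tilde a_T)_{jj}=(\xi_T^j)^{-1/q}$ for $j\in\mathcal J^{(0)}$ and $\alpha_T^j$ for $j\in\mathcal J^{(1)}$; $G_T=a_T^{-1}\tilde a_T$. For $R>0$, $\mathsf c_{T,R}=\sup\frac{|\mathbb H_T(\theta^*+a_Tu)-\mathbb H_T(\theta^*+a_Tv)|}{|u-v|^q}$ over $u,v\in\mathbb U_T$, $u\ne v$, $|a_Tu|,|a_Tv|<R\|a_T\|^{1-\eta}$; for $m>0$, $c_T(m,R)=E[|\mathsf c_{T,R}|^{m}\|G_T^{(00)}\|^{qm}]$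 (possibly $\infty$). *)

theory Defs
  imports "HOL-Probability.Probability"
begin

definition enn_powr :: "ennreal \<Rightarrow> real \<Rightarrow> ennreal" where
  "enn_powr x p = (if x = \<top> then \<top> else ennreal (enn2real x powr p))"

definition diag_mat :: "('n::finite \<Rightarrow> real) \<Rightarrow> real^'n^'n" where
  "diag_mat d = (\<chi> i j. if i = j then d i else 0)"

definition spec_norm :: "real^'n::finite^'n \<Rightarrow> real" where
  "spec_norm A = onorm (\<lambda>x. A *v x)"

definition proj_coords :: "'n::finite set \<Rightarrow> real^'n \<Rightarrow> real^'n" where
  "proj_coords J x = (\<chi> i. if i \<in> J then x $ i else 0)"

text \<open>Spectral norm of the principal sub-matrix A^(JJ) = (A_ij)_{i,j in J}.\<close>
definition sub_spec_norm :: "real^'n::finite^'n \<Rightarrow> 'n set \<Rightarrow> real" where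
  "sub_spec_norm A J = onorm (\<lambda>x. proj_coords J (A *v proj_coords J x))"

definition grad :: "(real^'n::finite \<Rightarrow> real) \<Rightarrow> real^'n \<Rightarrow> real^'n" where
  "grad f x = (\<chi> i. frechet_derivative f (at x) (axis i 1))"

definition hess :: "(real^'n::finite \<Rightarrow> real) \<Rightarrow> real^'n \<Rightarrow> real^'n^'n" where
  "hess f x = (\<chi> i j. frechet_derivative (\<lambda>y. grad f y $ i) (at x) (axis j 1))"

definition deriv3 :: "(real^'n::finite \<Rightarrow> real) \<Rightarrow> real^'n \<Rightarrow> real^'n^'n^'n" where
  "deriv3 f x = (\<chi> i j k. frechet_derivative (\<lambda>y. hess f y $ i $ j) (at x) (axis k 1))"

definition thrice_differentiable_on :: "(real^'n::finite \<Rightarrow> real) \<Rightarrow> (real^'n) set \<Rightarrow> bool" where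
  "thrice_differentiable_on f S \<longleftrightarrow>
     (\<forall>x\<in>S. f differentiable (at x) \<and> grad f differentiable (at x) \<and> hess f differentiable (at x))"

definition aT :: "(real \<Rightarrow> 'n::finite \<Rightarrow> real) \<Rightarrow> real \<Rightarrow> real^'n^'n" where
  "aT \<alpha> T = diag_mat (\<alpha> T)"

definition J0 :: "real^'n::finite \<Rightarrow> 'n set" where
  "J0 \<theta>s = {j. \<theta>s $ j = 0}"

definition atildeT :: "real \<Rightarrow> real^'n::finite \<Rightarrow> (real \<Rightarrow> 'n \<Rightarrow> real) \<Rightarrow> (real \<Rightarrow> 'n \<Rightarrow> real)
    \<Rightarrow> real \<Rightarrow> real^'n^'n" where
  "atildeT q \<theta>s \<alpha> \<xi> T =
     diag_mat (\<lambda>j. if j \<in> J0 \<theta>s then \<xi> T j powr (-(1/q)) else \<alpha> T j)"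

definition GT :: "real \<Rightarrow> real^'n::finite \<Rightarrow> (real \<Rightarrow> 'n \<Rightarrow> real) \<Rightarrow> (real \<Rightarrow> 'n \<Rightarrow> real)
    \<Rightarrow> real \<Rightarrow> real^'n^'n" where
  "GT q \<theta>s \<alpha> \<xi> T = matrix_inv (aT \<alpha> T) ** atildeT q \<theta>s \<alpha> \<xi> T"

definition UT :: "(real^'n::finite) set \<Rightarrow> real^'n \<Rightarrow> (real \<Rightarrow> 'n \<Rightarrow> real) \<Rightarrow> real \<Rightarrow> (real^'n) set" where
  "UT \<Theta> \<theta>s \<alpha> T = {u. \<theta>s + aT \<alpha> T *v u \<in> closure \<Theta>}"

definition cTR :: "real \<Rightarrow> real \<Rightarrow> (real^'n::finite) set \<Rightarrow> real^'n \<Rightarrow> (real \<Rightarrow> 'n \<Rightarrow> real)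
    \<Rightarrow> (real \<Rightarrow> 'a \<Rightarrow> real^'n \<Rightarrow> real) \<Rightarrow> real \<Rightarrow> real \<Rightarrow> 'a \<Rightarrow> ennreal" where
  "cTR q \<eta> \<Theta> \<theta>s \<alpha> H T R \<omega> =
     (SUP uv \<in> {(u, v). u \<in> UT \<Theta> \<theta>s \<alpha> T \<and> v \<in> UT \<Theta> \<theta>s \<alpha> T \<and> u \<noteq> v \<and>
                 norm (aT \<alpha> T *v u) < R * spec_norm (aT \<alpha> T) powr (1 - \<eta>) \<and>
                 norm (aT \<alpha> T *v v) < R * spec_norm (aT \<alpha> T) powr (1 - \<eta>)}.
        ennreal (\<bar>H T \<omega> (\<theta>s + aT \<alpha> T *v fst uv) - H T \<omega> (\<theta>s + aT \<alpha> T *v snd uv)\<bar>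
                 / norm (fst uv - snd uv) powr q))"

definition cT :: "'a measure \<Rightarrow> real \<Rightarrow> real \<Rightarrow> (real^'n::finite) set \<Rightarrow> real^'n
    \<Rightarrow> (real \<Rightarrow> 'n \<Rightarrow> real) \<Rightarrow> (real \<Rightarrow> 'n \<Rightarrow> real) \<Rightarrow> (real \<Rightarrow> 'a \<Rightarrow> real^'n \<Rightarrow> real)
    \<Rightarrow> real \<Rightarrow> real \<Rightarrow> real \<Rightarrow> ennreal" where
  "cT M q \<eta> \<Theta> \<theta>s \<alpha> \<xi> H T m R =
     (\<integral>\<^sup>+ \<omega>. enn_powr (cTR q \<eta> \<Theta> \<theta>s \<alpha> H T R \<omega>) m
              * ennreal (sub_spec_norm (GT q \<theta>s \<alpha> \<xi> T) (J0 \<theta>s) powr (q * m)) \<partial>M)"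

end

theory Submission
  imports Defs
begin

text \<open>
  On the ball of radius \<open>r = R0 \<parallel>a_T\<parallel>^(1-\<eta>)\<close> around \<open>\<theta>*\<close>, two applications of the
  mean value inequality give the Lipschitz bound \<open>|H x - H y| \<le> (|\<partial>H(\<theta>*)| + r sup|\<partial>\<^sup>2H|) |x - y|\<close>.
  Interpolating it with the diameter \<open>2r\<close> of the ball bounds the Hoelder constant in the rescaled
  coordinates \<open>\<theta> = \<theta>* + a_T u\<close> by \<open>(|\<partial>H(\<theta>*)| + r sup|\<partial>\<^sup>2H|) \<parallel>a_T\<parallel>^q (2r)^(1-q)\<close>, and for
  \<open>R0 \<le> 1/2\<close> this is at most \<open>\<parallel>a_T\<parallel>^(-\<eta>(2-q)) (\<parallel>a_T\<parallel> |\<partial>H(\<theta>*)| + \<parallel>a_T\<parallel>\<^sup>2 sup|\<partial>\<^sup>2H|)\<close>.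
  Taking \<open>m1\<close>-th moments, (ii) and (iii) give the claim.

  Neither \<open>c_{T,R}\<close> (a supremum over uncountably many pairs) nor the gradient (defined by choice)
  is known to be measurable, so the expectation is a lower integral. It is still subadditive when
  one summand is measurable, and the gradient at \<open>\<theta>*\<close> agrees almost surely with a measurable
  limit of difference quotients.
\<close>

lemma nn_integral_add_le:
  assumes [measurable]: "f \<in> borel_measurable M"
  shows "(\<integral>\<^sup>+x. f x + g x \<partial>M) \<le> integral\<^sup>N M f + integral\<^sup>N M g"
proof -
  have "integral\<^sup>N M h \<le> integral\<^sup>N M f + integral\<^sup>N M g"
    if h: "simple_function M h" "h \<le> (\<lambda>x. f x + g x)" "\<forall>x. h x < top" for h
  proof -
    have [measurable]: "h \<in> borel_measurable M"
      using h(1) by (rule borel_measurable_simple_function)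
    have "integral\<^sup>N M h \<le> (\<integral>\<^sup>+x. (h x - f x) + f x \<partial>M)"
      by (rule nn_integral_mono) (use diff_add_self_ennreal in force)
    also have "\<dots> = (\<integral>\<^sup>+x. h x - f x \<partial>M) + integral\<^sup>N M f"
      by (rule nn_integral_add) auto
    also have "(\<integral>\<^sup>+x. h x - f x \<partial>M) \<le> integral\<^sup>N M g"
      using h(2,3) by (intro nn_integral_mono) (metis ennreal_minus_le_iff le_fun_def less_irrefl)
    finally show ?thesis
      by (simp add: add.commute add_right_mono)
  qed
  then show ?thesis
    by (subst nn_integral_def_finite) (auto intro!: SUP_least simp: nn_integral_eq_simple_integral)
qed

lemma nn_integral_cmult_le:
  assumes "0 \<le> k"
  shows "(\<integral>\<^sup>+x. ennreal k * g x \<partial>M) \<le> ennreal k * integral\<^sup>N M g"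
proof (cases "k = 0")
  case False
  with assms have k: "0 < k"
    by simp
  have "integral\<^sup>N M h \<le> ennreal k * integral\<^sup>N M g"
    if h: "simple_function M h" "h \<le> (\<lambda>x. ennreal k * g x)" for h
  proof -
    have [measurable]: "h \<in> borel_measurable M"
      using h(1) by (rule borel_measurable_simple_function)
    have "integral\<^sup>N M h = (\<integral>\<^sup>+x. ennreal k * (ennreal (inverse k) * h x) \<partial>M)"
      using k by (simp add: mult.assoc[symmetric] flip: ennreal_mult)
    also have "\<dots> = ennreal k * (\<integral>\<^sup>+x. ennreal (inverse k) * h x \<partial>M)"
      by (rule nn_integral_cmult) auto
    also have "(\<integral>\<^sup>+x. ennreal (inverse k) * h x \<partial>M) \<le> integral\<^sup>N M g"
    proof (rule nn_integral_mono)
      fix x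
      have "ennreal (inverse k) * h x \<le> ennreal (inverse k) * (ennreal k * g x)"
        using h(2) by (simp add: le_fun_def mult_left_mono)
      also have "\<dots> = g x"
        using k by (simp add: mult.assoc[symmetric] flip: ennreal_mult)
      finally show "ennreal (inverse k) * h x \<le> g x" .
    qed
    finally show ?thesis
      by (simp add: mult_left_mono)
  qed
  then show ?thesis
    by (subst nn_integral_def) (auto intro!: SUP_least simp: nn_integral_eq_simple_integral)
qed simp

lemma norm_matrix_vector_mult_le:
  fixes A :: "real^'n::finite^'m::finite"
  shows "norm (A *v x) \<le> norm A * norm x"
proof -
  have "norm (A *v x) = L2_set (\<lambda>i. \<bar>A $ i \<bullet> x\<bar>) UNIV"
    by (simp add: norm_vec_def L2_set_def matrix_vector_mult_def inner_vec_def mult.commute)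
  also have "\<dots> \<le> L2_set (\<lambda>i. norm (A $ i) * norm x) UNIV"
    by (rule L2_set_mono) (auto simp: Cauchy_Schwarz_ineq2)
  also have "\<dots> = norm A * norm x"
    by (simp add: L2_set_left_distrib norm_vec_def)
  finally show ?thesis .
qed

lemma has_derivative_grad:
  fixes f :: "real^'n::finite \<Rightarrow> real"
  assumes "f differentiable (at z)"
  shows "(f has_derivative (\<lambda>h. grad f z \<bullet> h)) (at z)"
proof -
  define D where "D = frechet_derivative f (at z)"
  have D: "(f has_derivative D) (at z)"
    using assms frechet_derivative_works D_def by blast
  have "D h = grad f z \<bullet> h" for h
  proof -
    have "D h = D (\<Sum>i\<in>UNIV. h $ i *\<^sub>R axis i 1)"
      using basis_expansion[of h] by (simp add: scalar_mult_eq_scaleR)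
    also have "\<dots> = (\<Sum>i\<in>UNIV. h $ i * D (axis i 1))"
      using has_derivative_linear[OF D] by (simp add: linear_sum linear_scale)
    finally show ?thesis
      by (simp add: grad_def inner_vec_def D_def mult.commute)
  qed
  then show ?thesis
    using D by (metis ext)
qed

lemma has_derivative_hess:
  fixes f :: "real^'n::finite \<Rightarrow> real"
  assumes "grad f differentiable (at z)"
  shows "(grad f has_derivative (\<lambda>h. hess f z *v h)) (at z)"
proof -
  define D where "D = frechet_derivative (grad f) (at z)"
  have D: "(grad f has_derivative D) (at z)"
    using assms frechet_derivative_works D_def by blast
  have "((\<lambda>y. grad f y $ i) has_derivative (\<lambda>h. D h $ i)) (at z)" for i
    using bounded_linear.has_derivative[OF bounded_linear_vec_nth D] by simp
  then have "frechet_derivative (\<lambda>y. grad f y $ i) (at z) = (\<lambda>h. D h $ i)" for i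
    by (metis frechet_derivative_at)
  then have "hess f z = matrix D"
    by (simp add: hess_def matrix_def vec_eq_iff)
  then show ?thesis
    using D has_derivative_bounded_linear[OF D] by simp
qed

lemma abs_diff_le_grad_hess_bound:
  fixes f :: "real^'n::finite \<Rightarrow> real"
  assumes diff: "\<And>z. z \<in> ball c r \<Longrightarrow> f differentiable (at z) \<and> grad f differentiable (at z)"
    and hess: "\<And>z. z \<in> ball c r \<Longrightarrow> norm (hess f z) \<le> L"
    and x: "x \<in> ball c r" and y: "y \<in> ball c r"
  shows "\<bar>f x - f y\<bar> \<le> (norm (grad f c) + L * r) * norm (x - y)"
proof -
  have "0 < r"
    using x zero_le_dist[of c x] unfolding mem_ball by linarith
  then have c: "c \<in> ball c r"
    by simp
  have grad_bound: "norm (grad f z) \<le> norm (grad f c) + L * r" if z: "z \<in> ball c r" for z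
  proof -
    have "norm (grad f z - grad f c) \<le> L * norm (z - c)"
    proof (rule differentiable_bound[of "ball c r" "grad f" "\<lambda>z h. hess f z *v h"])
      show "(grad f has_derivative (\<lambda>h. hess f w *v h)) (at w within ball c r)"
        if "w \<in> ball c r" for w
        using has_derivative_hess diff that has_derivative_at_withinI by blast
      show "onorm (\<lambda>h. hess f w *v h) \<le> L" if "w \<in> ball c r" for w
        by (intro onorm_le order_trans[OF norm_matrix_vector_mult_le] mult_right_mono hess[OF that]) simp
    qed (use z c in auto)
    also have "\<dots> \<le> L * r"
      using z order_trans[OF norm_ge_zero hess[OF c]]
      by (intro mult_left_mono) (auto simp: dist_norm norm_minus_commute)
    finally show ?thesis
      using norm_triangle_ineq2[of "grad f z" "grad f c"] by linarith
  qed
  have "norm (f x - f y) \<le> (norm (grad f c) + L * r) * norm (x - y)"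
  proof (rule differentiable_bound[of "ball c r" f "\<lambda>z h. grad f z \<bullet> h"])
    show "(f has_derivative (\<lambda>h. grad f w \<bullet> h)) (at w within ball c r)" if "w \<in> ball c r" for w
      using has_derivative_grad diff that has_derivative_at_withinI by blast
    show "onorm (\<lambda>h. grad f w \<bullet> h) \<le> norm (grad f c) + L * r" if "w \<in> ball c r" for w
    proof (rule onorm_le)
      fix h
      have "norm (grad f w \<bullet> h) \<le> norm (grad f w) * norm h"
        using Cauchy_Schwarz_ineq2 by simp
      also have "\<dots> \<le> (norm (grad f c) + L * r) * norm h"
        using grad_bound[OF that] by (simp add: mult_right_mono)
      finally show "norm (grad f w \<bullet> h) \<le> (norm (grad f c) + L * r) * norm h" .
    qed
  qed (use x y in auto)
  then show ?thesis by simp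
qed

lemma holder_quotient_le:
  fixes l :: "'a::real_normed_vector \<Rightarrow> 'b::real_normed_vector"
  assumes l: "bounded_linear l"
    and lip: "\<And>x y. x \<in> ball c r \<Longrightarrow> y \<in> ball c r \<Longrightarrow> \<bar>f x - f y\<bar> \<le> \<Lambda> * norm (x - y)"
    and \<Lambda>: "0 \<le> \<Lambda>" and q: "0 < q" "q \<le> 1"
    and uv: "u \<noteq> v" "norm (l u) < r" "norm (l v) < r"
  shows "\<bar>f (c + l u) - f (c + l v)\<bar> / norm (u - v) powr q \<le> \<Lambda> * onorm l powr q * (2 * r) powr (1 - q)"
proof -
  define d where "d = norm (l u - l v)"
  have d_onorm: "d \<le> onorm l * norm (u - v)"
    unfolding d_def using onorm[OF l, of "u - v"] by (simp add: linear_diff[OF bounded_linear.linear[OF l]])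
  have d_diam: "d \<le> 2 * r"
    unfolding d_def using norm_triangle_ineq4[of "l u" "l v"] uv by linarith
  have "d \<le> (onorm l * norm (u - v)) powr q * (2 * r) powr (1 - q)"
  proof (cases "d = 0")
    case False
    then have "d = d powr q * d powr (1 - q)"
      by (simp add: d_def flip: powr_add)
    also have "\<dots> \<le> (onorm l * norm (u - v)) powr q * (2 * r) powr (1 - q)"
      using d_onorm d_diam q by (intro mult_mono powr_mono2) (auto simp: d_def)
    finally show ?thesis .
  qed simp
  then have "\<bar>f (c + l u) - f (c + l v)\<bar> \<le> \<Lambda> * ((onorm l * norm (u - v)) powr q * (2 * r) powr (1 - q))"
    using lip[of "c + l u" "c + l v"] uv \<Lambda> by (auto simp: d_def dist_norm intro: order_trans mult_left_mono)
  then show ?thesis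
    using uv(1) by (simp add: divide_le_eq powr_mult algebra_simps)
qed

text \<open>The cut-off outside \<open>S\<close> keeps the quotients measurable in a random parameter of \<open>f\<close>
  when measurability is only known at the points of \<open>S\<close>.\<close>

definition grad_quotient :: "(real^'n::finite \<Rightarrow> real) \<Rightarrow> (real^'n) set \<Rightarrow> real^'n \<Rightarrow> nat \<Rightarrow> real^'n" where
  "grad_quotient f S z n = (\<chi> i. let h = inverse (real (Suc n)) in
     if z + h *\<^sub>R axis i 1 \<in> S then (f (z + h *\<^sub>R axis i 1) - f z) / h else 0)"

lemma grad_quotient_tendsto:
  fixes f :: "real^'n::finite \<Rightarrow> real"
  assumes diff: "f differentiable (at z)" and z: "z \<in> interior S"
  shows "grad_quotient f S z \<longlonglongrightarrow> grad f z"
proof (rule vec_tendstoI)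
  fix i
  define h where "h n = inverse (real (Suc n))" for n
  have line: "((\<lambda>t. z + t *\<^sub>R axis i 1) has_derivative (\<lambda>t. t *\<^sub>R axis i 1)) (at 0)"
    by (auto intro!: derivative_eq_intros)
  have "(f has_derivative (\<lambda>h. grad f z \<bullet> h)) (at (z + 0 *\<^sub>R axis i 1))"
    using has_derivative_grad[OF diff] by simp
  from has_derivative_compose[OF line this]
  have "((\<lambda>t. f (z + t *\<^sub>R axis i 1)) has_derivative (\<lambda>t. grad f z \<bullet> (t *\<^sub>R axis i 1))) (at 0)" .
  moreover have "(\<lambda>t. grad f z \<bullet> (t *\<^sub>R axis i 1)) = (*) (grad f z $ i)"
    by (auto simp: inner_axis mult.commute)
  ultimately have "((\<lambda>t. f (z + t *\<^sub>R axis i 1)) has_real_derivative grad f z $ i) (at 0)"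
    by (simp add: has_field_derivative_def)
  then have "((\<lambda>t. (f (z + t *\<^sub>R axis i 1) - f z) / t) \<longlongrightarrow> grad f z $ i) (at 0)"
    by (simp add: DERIV_def)
  moreover have "filterlim h (at 0) sequentially"
    unfolding h_def filterlim_at using LIMSEQ_inverse_real_of_nat by auto
  ultimately have quotient: "(\<lambda>n. (f (z + h n *\<^sub>R axis i 1) - f z) / h n) \<longlonglongrightarrow> grad f z $ i"
    by (rule filterlim_compose)
  obtain e where e: "0 < e" "ball z e \<subseteq> S"
    using z mem_interior by blast
  have "eventually (\<lambda>n. h n < e) sequentially"
    using LIMSEQ_inverse_real_of_nat e(1) by (auto simp: h_def order_tendsto_iff)
  then have "eventually (\<lambda>n. z + h n *\<^sub>R axis i 1 \<in> S) sequentially"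
    by eventually_elim (use e in \<open>auto simp: h_def dist_norm subset_iff\<close>)
  then have "eventually (\<lambda>n. (f (z + h n *\<^sub>R axis i 1) - f z) / h n = grad_quotient f S z n $ i)
      sequentially"
    by eventually_elim (simp add: grad_quotient_def h_def Let_def)
  with quotient show "(\<lambda>n. grad_quotient f S z n $ i) \<longlonglongrightarrow> grad f z $ i"
    by (rule Lim_transform_eventually)
qed

lemma borel_measurable_lim_grad_quotient:
  assumes "\<And>\<theta>. \<theta> \<in> S \<Longrightarrow> (\<lambda>\<omega>. f \<omega> \<theta>) \<in> borel_measurable M" "z \<in> S"
  shows "(\<lambda>\<omega>. lim (grad_quotient (f \<omega>) S z)) \<in> borel_measurable M"
proof -
  have "(\<lambda>\<omega>. grad_quotient (f \<omega>) S z n $ i) \<in> borel_measurable M" for n i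
    using assms by (cases "z + inverse (real (Suc n)) *\<^sub>R axis i 1 \<in> S") (auto simp: grad_quotient_def Let_def)
  then have "(\<lambda>\<omega>. grad_quotient (f \<omega>) S z n) \<in> borel_measurable M" for n
    by (subst borel_measurable_euclidean_space) (auto simp: Basis_vec_def inner_axis)
  then show ?thesis
    by measurable
qed

lemma holder_constant_le:
  fixes A r q \<eta> g L :: real
  assumes A: "0 < A" "A \<le> 1" and r: "0 < r" "2 * r \<le> A powr (1 - \<eta>)"
    and q: "0 < q" "q \<le> 1" and \<eta>: "0 \<le> \<eta>" and g: "0 \<le> g" and L: "0 \<le> L"
  shows "(g + L * r) * A powr q * (2 * r) powr (1 - q)
           \<le> A powr (-(\<eta> * (2 - q))) * (A * g + A powr 2 * L)"
proof -
  define k where "k = \<eta> * (2 - q)"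
  define e where "e = q + (1 - \<eta>) * (1 - q)"
  have "(2 * r) powr (1 - q) \<le> (A powr (1 - \<eta>)) powr (1 - q)"
    using r q by (intro powr_mono2) auto
  then have scale: "A powr q * (2 * r) powr (1 - q) \<le> A powr e"
    by (simp add: e_def powr_powr powr_add mult_left_mono)
  have exponent: "A powr (1 - \<eta>) * A powr e = A powr (-k) * A powr 2"
    by (simp add: e_def k_def algebra_simps flip: powr_add)
  have "A powr e \<le> A powr (-k + 1)"
    using A \<eta> q by (intro powr_mono') (auto simp: e_def k_def algebra_simps)
  also have "\<dots> = A powr (-k) * A"
    using A by (metis abs_of_pos powr_add powr_one')
  finally have A_e: "A powr e \<le> A powr (-k) * A" .
  have "L * r \<le> L * A powr (1 - \<eta>)"
    using r L by (intro mult_left_mono) auto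
  then have "(g + L * r) * (A powr q * (2 * r) powr (1 - q)) \<le> (g + L * A powr (1 - \<eta>)) * A powr e"
    using scale g L r by (intro mult_mono) auto
  also have "\<dots> = g * A powr e + L * (A powr (1 - \<eta>) * A powr e)"
    by (simp add: algebra_simps)
  also have "\<dots> \<le> g * (A powr (-k) * A) + L * (A powr (-k) * A powr 2)"
    using A_e g by (simp add: exponent mult_left_mono)
  also have "\<dots> = A powr (-k) * (A * g + A powr 2 * L)"
    by (simp add: algebra_simps)
  finally show ?thesis
    by (simp add: k_def mult.assoc)
qed

lemma add_powr_le:
  fixes x y m :: real
  assumes "0 \<le> x" "0 \<le> y" "0 < m"
  shows "(x + y) powr m \<le> 2 powr m * (x powr m + y powr m)"
proof -
  have "(x + y) powr m \<le> (2 * max x y) powr m"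
    using assms by (intro powr_mono2) auto
  also have "\<dots> = 2 powr m * max x y powr m"
    by (simp add: powr_mult)
  also have "max x y powr m \<le> x powr m + y powr m"
    by (cases "x \<le> y") (auto simp: max_def)
  finally show ?thesis
    by (simp add: mult_left_mono)
qed

lemma enn_powr_ennreal: "0 \<le> x \<Longrightarrow> enn_powr (ennreal x) p = ennreal (x powr p)"
  by (simp add: enn_powr_def)

lemma enn_powr_top [simp]: "enn_powr \<top> p = \<top>"
  by (simp add: enn_powr_def)

lemma enn_powr_mono:
  assumes "x \<le> y" "0 \<le> p"
  shows "enn_powr x p \<le> enn_powr y p"
proof (cases "y = \<top>")
  case False
  then have "x \<noteq> \<top>"
    using assms(1) top.extremum_unique by fastforce
  then show ?thesis
    using assms False by (auto simp: enn_powr_def top.not_eq_extremum intro!: ennreal_leI powr_mono2 enn2real_mono)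
qed simp

lemma ennreal_le_of_SUP_less_top:
  fixes f :: "'b \<Rightarrow> ennreal"
  assumes "(SUP x \<in> X. f x) < \<top>"
  obtains c where "0 \<le> c" "\<And>x. x \<in> X \<Longrightarrow> f x \<le> ennreal c"
proof
  show "0 \<le> enn2real (SUP x \<in> X. f x)"
    by simp
  show "f x \<le> ennreal (enn2real (SUP x \<in> X. f x))" if "x \<in> X" for x
    using assms that by (simp add: SUP_upper)
qed

lemma spec_norm_aT_pos:
  fixes \<alpha> :: "real \<Rightarrow> 'n::finite \<Rightarrow> real"
  assumes "\<And>j. \<alpha> T j \<noteq> 0"
  shows "0 < spec_norm (aT \<alpha> T)"
proof -
  fix i :: 'n
  have "(aT \<alpha> T *v axis i 1) $ i = \<alpha> T i"
    by (simp add: aT_def diag_mat_def matrix_vector_mult_def axis_def if_distrib cong: if_cong)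
  then have "aT \<alpha> T *v axis i 1 \<noteq> 0"
    using assms by auto
  moreover have "bounded_linear (\<lambda>x. aT \<alpha> T *v x)"
    by simp
  ultimately show ?thesis
    unfolding spec_norm_def using onorm_pos_lt by blast
qed

lemma cTR_le:
  fixes H :: "real \<Rightarrow> 'a \<Rightarrow> real^'n::finite \<Rightarrow> real" and \<alpha> :: "real \<Rightarrow> 'n \<Rightarrow> real" and T :: real
  defines "A \<equiv> spec_norm (aT \<alpha> T)"
  assumes diff: "\<And>z. z \<in> ball \<theta>s R0 \<Longrightarrow> H T \<omega> differentiable (at z) \<and> grad (H T \<omega>) differentiable (at z)"
    and hess: "\<And>z. z \<in> ball \<theta>s R0 \<Longrightarrow> norm (hess (H T \<omega>) z) \<le> L"
    and A: "0 < A" "A \<le> 1" and R0: "0 < R0" "R0 \<le> 1/2"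
    and q: "0 < q" "q \<le> 1" and \<eta>: "0 \<le> \<eta>" "\<eta> \<le> 1"
  shows "cTR q \<eta> \<Theta> \<theta>s \<alpha> H T R0 \<omega>
           \<le> ennreal (A powr (-(\<eta> * (2 - q))) * (A * norm (grad (H T \<omega>) \<theta>s) + A powr 2 * L))"
proof -
  define r where "r = R0 * A powr (1 - \<eta>)"
  have "A powr (1 - \<eta>) \<le> 1"
    using A \<eta> by (intro powr_le1) auto
  then have r: "0 < r" "r \<le> R0" "2 * r \<le> A powr (1 - \<eta>)"
    using A R0 by (auto simp: r_def mult_left_le)
  have "\<theta>s \<in> ball \<theta>s R0"
    using R0 by simp
  then have L: "0 \<le> L"
    using order_trans[OF norm_ge_zero hess] by blast
  have lip: "\<bar>H T \<omega> x - H T \<omega> y\<bar> \<le> (norm (grad (H T \<omega>) \<theta>s) + L * r) * norm (x - y)"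
    if "x \<in> ball \<theta>s r" "y \<in> ball \<theta>s r" for x y
    by (rule abs_diff_le_grad_hess_bound) (use diff hess that r in auto)
  have "\<bar>H T \<omega> (\<theta>s + aT \<alpha> T *v u) - H T \<omega> (\<theta>s + aT \<alpha> T *v v)\<bar> / norm (u - v) powr q
      \<le> A powr (-(\<eta> * (2 - q))) * (A * norm (grad (H T \<omega>) \<theta>s) + A powr 2 * L)"
    if uv: "u \<noteq> v" "norm (aT \<alpha> T *v u) < r" "norm (aT \<alpha> T *v v) < r" for u v
  proof -
    have "\<bar>H T \<omega> (\<theta>s + aT \<alpha> T *v u) - H T \<omega> (\<theta>s + aT \<alpha> T *v v)\<bar> / norm (u - v) powr q
        \<le> (norm (grad (H T \<omega>) \<theta>s) + L * r) * A powr q * (2 * r) powr (1 - q)"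
      using holder_quotient_le[of "\<lambda>x. aT \<alpha> T *v x", OF _ lip _ q uv] L r
      by (simp add: A_def spec_norm_def)
    also have "\<dots> \<le> A powr (-(\<eta> * (2 - q))) * (A * norm (grad (H T \<omega>) \<theta>s) + A powr 2 * L)"
      by (rule holder_constant_le) (use A r q \<eta> L in auto)
    finally show ?thesis .
  qed
  then show ?thesis
    unfolding cTR_def by (auto simp: r_def A_def intro!: SUP_least ennreal_leI)
qed

lemma enn_powr_cTR_le:
  fixes H :: "real \<Rightarrow> 'a \<Rightarrow> real^'n::finite \<Rightarrow> real" and \<alpha> :: "real \<Rightarrow> 'n \<Rightarrow> real" and T :: real
  defines "A \<equiv> spec_norm (aT \<alpha> T)"
  assumes diff: "\<And>z. z \<in> ball \<theta>s R0 \<Longrightarrow> H T \<omega> differentiable (at z) \<and> grad (H T \<omega>) differentiable (at z)"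
    and B: "ball \<theta>s R0 \<subseteq> B"
    and A: "0 < A" "A \<le> 1" and R0: "0 < R0" "R0 \<le> 1/2"
    and q: "0 < q" "q \<le> 1" and \<eta>: "0 \<le> \<eta>" "\<eta> \<le> 1" and m: "0 < m"
  shows "enn_powr (cTR q \<eta> \<Theta> \<theta>s \<alpha> H T R0 \<omega>) m
           \<le> ennreal (2 powr m * A powr (-(\<eta> * (2 - q)) * m))
             * (ennreal (A powr m * norm (grad (H T \<omega>) \<theta>s) powr m)
                + ennreal (A powr (2 * m)) * enn_powr (SUP \<theta>\<in>B. ennreal (norm (hess (H T \<omega>) \<theta>))) m)"
proof -
  define S where "S = (SUP \<theta>\<in>B. ennreal (norm (hess (H T \<omega>) \<theta>)))"
  define g where "g = norm (grad (H T \<omega>) \<theta>s)"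
  define k where "k = \<eta> * (2 - q)"
  have "enn_powr (cTR q \<eta> \<Theta> \<theta>s \<alpha> H T R0 \<omega>) m
      \<le> ennreal (2 powr m * A powr (-k * m)) * (ennreal (A powr m * g powr m) + ennreal (A powr (2 * m)) * enn_powr S m)"
  proof (cases "S = \<top>")
    case True
    then show ?thesis
      using A by (simp add: ennreal_mult_top)
  next
    case False
    define L where "L = enn2real S"
    have L: "0 \<le> L" "S = ennreal L"
      using False by (simp_all add: L_def less_top)
    have hess: "norm (hess (H T \<omega>) z) \<le> L" if "z \<in> ball \<theta>s R0" for z
    proof -
      have "ennreal (norm (hess (H T \<omega>) z)) \<le> S"
        using B that unfolding S_def by (auto intro: SUP_upper)
      then show ?thesis
        using L by simp
    qed
    have "(A powr (-k) * (A * g + A powr 2 * L)) powr m = A powr (-k * m) * (A * g + A powr 2 * L) powr m"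
      using A L by (simp add: g_def powr_mult powr_powr)
    also have "\<dots> \<le> A powr (-k * m) * (2 powr m * ((A * g) powr m + (A powr 2 * L) powr m))"
      using A L m by (intro mult_left_mono add_powr_le) (auto simp: g_def)
    also have "\<dots> = 2 powr m * A powr (-k * m) * (A powr m * g powr m + A powr (2 * m) * L powr m)"
      using A L by (simp add: g_def powr_mult powr_powr algebra_simps del: powr_numeral)
    finally have real_bound: "(A powr (-k) * (A * g + A powr 2 * L)) powr m
        \<le> 2 powr m * A powr (-k * m) * (A powr m * g powr m + A powr (2 * m) * L powr m)" .
    have "enn_powr (cTR q \<eta> \<Theta> \<theta>s \<alpha> H T R0 \<omega>) m \<le> enn_powr (ennreal (A powr (-k) * (A * g + A powr 2 * L))) m"
      unfolding A_def g_def k_def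
      by (intro enn_powr_mono cTR_le) (use diff hess A R0 q \<eta> m in \<open>auto simp: A_def\<close>)
    also have "\<dots> = ennreal ((A powr (-k) * (A * g + A powr 2 * L)) powr m)"
      using A L by (intro enn_powr_ennreal mult_nonneg_nonneg add_nonneg_nonneg) (auto simp: g_def)
    also have "\<dots> \<le> ennreal (2 powr m * A powr (-k * m) * (A powr m * g powr m + A powr (2 * m) * L powr m))"
      using real_bound by (rule ennreal_leI)
    also have "\<dots> = ennreal (2 powr m * A powr (-k * m))
        * (ennreal (A powr m * g powr m) + ennreal (A powr (2 * m)) * enn_powr S m)"
      using L by (simp add: enn_powr_ennreal ennreal_mult ennreal_plus)
    finally show ?thesis .
  qed
  then show ?thesis
    by (simp add: S_def g_def k_def)
qed

lemma cT_le:
  fixes H :: "real \<Rightarrow> 'a \<Rightarrow> real^'n::finite \<Rightarrow> real" and \<alpha> \<xi> :: "real \<Rightarrow> 'n \<Rightarrow> real"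
    and \<theta>s :: "real^'n" and T q :: real
  defines "A \<equiv> spec_norm (aT \<alpha> T)" and "\<sigma> \<equiv> sub_spec_norm (GT q \<theta>s \<alpha> \<xi> T) (J0 \<theta>s)"
  assumes meas: "\<And>\<theta>. \<theta> \<in> closure \<Theta> \<Longrightarrow> (\<lambda>\<omega>. H T \<omega> \<theta>) \<in> borel_measurable M"
    and \<theta>s: "\<theta>s \<in> interior (closure \<Theta>)"
    and diff: "AE \<omega> in M. thrice_differentiable_on (H T \<omega>) B"
    and B: "ball \<theta>s R0 \<subseteq> B"
    and A: "0 < A" "A \<le> 1" and R0: "0 < R0" "R0 \<le> 1/2"
    and q: "0 < q" "q \<le> 1" and \<eta>: "0 \<le> \<eta>" "\<eta> \<le> 1" and m: "0 < m"
    and grad_moment: "0 \<le> c\<^sub>1" "(\<integral>\<^sup>+\<omega>. ennreal (A powr m * norm (grad (H T \<omega>) \<theta>s) powr m) \<partial>M) \<le> ennreal c\<^sub>1"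
    and hess_moment: "0 \<le> c\<^sub>2" "(\<integral>\<^sup>+\<omega>. ennreal (A powr (2 * m))
                          * enn_powr (SUP \<theta>\<in>B. ennreal (norm (hess (H T \<omega>) \<theta>))) m \<partial>M) \<le> ennreal c\<^sub>2"
  shows "cT M q \<eta> \<Theta> \<theta>s \<alpha> \<xi> H T m R0
           \<le> ennreal (2 powr m * (c\<^sub>1 + c\<^sub>2) * (A powr (-(\<eta> * (2 - q))) * \<sigma> powr q) powr m)"
proof -
  define \<kappa> where "\<kappa> = 2 powr m * (A powr (-(\<eta> * (2 - q))) * \<sigma> powr q) powr m"
  define G where "G \<omega> = ennreal (A powr m * norm (grad (H T \<omega>) \<theta>s) powr m)" for \<omega>
  define G' where "G' \<omega> = ennreal (A powr m * norm (lim (grad_quotient (H T \<omega>) (closure \<Theta>) \<theta>s)) powr m)" for \<omega>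
  define Q where "Q \<omega> = ennreal (A powr (2 * m)) * enn_powr (SUP \<theta>\<in>B. ennreal (norm (hess (H T \<omega>) \<theta>))) m" for \<omega>
  have \<kappa>_eq: "\<kappa> = 2 powr m * A powr (-(\<eta> * (2 - q)) * m) * \<sigma> powr (q * m)"
    by (simp add: \<kappa>_def powr_mult powr_powr)
  have [measurable]: "(\<lambda>\<omega>. lim (grad_quotient (H T \<omega>) (closure \<Theta>) \<theta>s)) \<in> borel_measurable M"
    using meas \<theta>s interior_subset by (intro borel_measurable_lim_grad_quotient) auto
  have G'_meas: "G' \<in> borel_measurable M"
    unfolding G'_def by measurable
  have "AE \<omega> in M. G' \<omega> = G \<omega> \<and>
      enn_powr (cTR q \<eta> \<Theta> \<theta>s \<alpha> H T R0 \<omega>) m * ennreal (\<sigma> powr (q * m)) \<le> ennreal \<kappa> * (G \<omega> + Q \<omega>)"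
    using diff
  proof eventually_elim
    case (elim \<omega>)
    then have diff_ball: "H T \<omega> differentiable (at z) \<and> grad (H T \<omega>) differentiable (at z)"
      if "z \<in> ball \<theta>s R0" for z
      using B that by (auto simp: thrice_differentiable_on_def)
    have "\<theta>s \<in> ball \<theta>s R0"
      using R0 by simp
    then have "lim (grad_quotient (H T \<omega>) (closure \<Theta>) \<theta>s) = grad (H T \<omega>) \<theta>s"
      using diff_ball \<theta>s by (intro limI grad_quotient_tendsto) auto
    then have "G' \<omega> = G \<omega>"
      by (simp add: G'_def G_def)
    have "enn_powr (cTR q \<eta> \<Theta> \<theta>s \<alpha> H T R0 \<omega>) m
        \<le> ennreal (2 powr m * A powr (-(\<eta> * (2 - q)) * m)) * (G \<omega> + Q \<omega>)"
      unfolding G_def Q_def A_def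
      by (rule enn_powr_cTR_le) (use diff_ball B A R0 q \<eta> m in \<open>auto simp: A_def\<close>)
    then have "enn_powr (cTR q \<eta> \<Theta> \<theta>s \<alpha> H T R0 \<omega>) m * ennreal (\<sigma> powr (q * m))
        \<le> ennreal (2 powr m * A powr (-(\<eta> * (2 - q)) * m)) * (G \<omega> + Q \<omega>) * ennreal (\<sigma> powr (q * m))"
      by (rule mult_right_mono) simp
    also have "\<dots> = ennreal \<kappa> * (G \<omega> + Q \<omega>)"
      by (simp add: \<kappa>_eq ennreal_mult mult_ac)
    finally show ?case
      using \<open>G' \<omega> = G \<omega>\<close> by blast
  qed
  then have "cT M q \<eta> \<Theta> \<theta>s \<alpha> \<xi> H T m R0 \<le> (\<integral>\<^sup>+\<omega>. ennreal \<kappa> * (G' \<omega> + Q \<omega>) \<partial>M)"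
    unfolding cT_def \<sigma>_def[symmetric] by (intro nn_integral_mono_AE) (auto elim: AE_mp)
  also have "\<dots> \<le> ennreal \<kappa> * (\<integral>\<^sup>+\<omega>. G' \<omega> + Q \<omega> \<partial>M)"
    by (rule nn_integral_cmult_le) (simp add: \<kappa>_def)
  also have "\<dots> \<le> ennreal \<kappa> * (integral\<^sup>N M G' + integral\<^sup>N M Q)"
    using G'_meas by (intro mult_left_mono nn_integral_add_le) auto
  also have "integral\<^sup>N M G' = integral\<^sup>N M G"
    using \<open>AE \<omega> in M. G' \<omega> = G \<omega> \<and> _\<close> by (intro nn_integral_cong_AE) (auto elim: AE_mp)
  also have "ennreal \<kappa> * (integral\<^sup>N M G + integral\<^sup>N M Q) \<le> ennreal \<kappa> * (ennreal c\<^sub>1 + ennreal c\<^sub>2)"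
    using grad_moment hess_moment by (intro mult_left_mono add_mono) (simp_all add: G_def[abs_def] Q_def[abs_def])
  also have "\<dots> = ennreal (2 powr m * (c\<^sub>1 + c\<^sub>2) * (A powr (-(\<eta> * (2 - q))) * \<sigma> powr q) powr m)"
    using grad_moment(1) hess_moment(1) by (simp add: \<kappa>_def ennreal_mult mult_ac)
  finally show ?thesis .
qed

theorem proposition5:
  fixes M :: "'a measure"
    and \<Theta> :: "(real^'p::finite) set"
    and \<theta>s :: "real^'p"
    and TT :: "real set"
    and H :: "real \<Rightarrow> 'a \<Rightarrow> real^'p \<Rightarrow> real"
    and \<alpha> \<xi> :: "real \<Rightarrow> 'p \<Rightarrow> real"
    and q \<eta> R0s m1 :: real
  assumes prob: "prob_space M"
    and Theta: "open \<Theta>" "bounded \<Theta>" "\<theta>s \<in> \<Theta>"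
    and TT: "TT \<subseteq> {0..}" "\<not> bdd_above TT"
    and H_meas: "\<And>T \<theta>. T \<in> TT \<Longrightarrow> \<theta> \<in> closure \<Theta> \<Longrightarrow> (\<lambda>\<omega>. H T \<omega> \<theta>) \<in> borel_measurable M"
    and H_cont: "\<And>T \<omega>. T \<in> TT \<Longrightarrow> \<omega> \<in> space M \<Longrightarrow> continuous_on (closure \<Theta>) (H T \<omega>)"
    and xi_pos: "\<And>T j. T \<in> TT \<Longrightarrow> \<xi> T j > 0"
    and alpha_nz: "\<And>T j. T \<in> TT \<Longrightarrow> \<alpha> T j \<noteq> 0"
    and a_lim: "filterlim (\<lambda>T. spec_norm (aT \<alpha> T)) (nhds 0) (inf at_top (principal TT))"
    and q: "0 < q" "q \<le> 1"
    and eta: "0 < \<eta>" "\<eta> \<le> 1"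
    and R0s: "R0s > 0"
    and m1: "m1 > 0"
    and A12_i: "\<And>T. T \<in> TT \<Longrightarrow>
        AE \<omega> in M. thrice_differentiable_on (H T \<omega>) {\<theta> \<in> \<Theta>. norm (\<theta> - \<theta>s) < R0s}"
    and A12_ii: "(SUP T \<in> TT. \<integral>\<^sup>+ \<omega>. ennreal (spec_norm (aT \<alpha> T) powr m1
                     * norm (grad (H T \<omega>) \<theta>s) powr m1) \<partial>M) < \<top>"
    and A12_iii: "(SUP T \<in> TT. \<integral>\<^sup>+ \<omega>. ennreal (spec_norm (aT \<alpha> T) powr (2 * m1))
                     * enn_powr (SUP \<theta> \<in> {\<theta> \<in> \<Theta>. norm (\<theta> - \<theta>s) < R0s}.
                                   ennreal (norm (hess (H T \<omega>) \<theta>))) m1 \<partial>M) < \<top>"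
    and A12_iv: "(SUP T \<in> TT. \<integral>\<^sup>+ \<omega>. ennreal (spec_norm (aT \<alpha> T) powr (2 * m1))
                     * enn_powr (SUP \<theta> \<in> {\<theta> \<in> \<Theta>. norm (\<theta> - \<theta>s) < R0s}.
                                   ennreal (norm (deriv3 (H T \<omega>) \<theta>))) m1 \<partial>M) < \<top>"
  shows "\<exists>R0 > 0. \<exists>K > 0. \<forall>T \<in> TT. spec_norm (aT \<alpha> T) \<le> 1 \<longrightarrow>
           cT M q \<eta> \<Theta> \<theta>s \<alpha> \<xi> H T m1 R0
             \<le> ennreal (K * (spec_norm (aT \<alpha> T) powr (-(\<eta> * (2 - q)))
                            * sub_spec_norm (GT q \<theta>s \<alpha> \<xi> T) (J0 \<theta>s) powr q) powr m1)"
proof -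
  obtain e where e: "0 < e" "ball \<theta>s e \<subseteq> \<Theta>"
    using Theta(1,3) openE by blast
  define R0 where "R0 = min (min e R0s) (1/2)"
  define B where "B = {\<theta> \<in> \<Theta>. norm (\<theta> - \<theta>s) < R0s}"
  have R0: "0 < R0" "R0 \<le> 1/2"
    using e R0s by (auto simp: R0_def)
  have ball_B: "ball \<theta>s R0 \<subseteq> B"
    using e by (auto simp: R0_def B_def dist_norm norm_minus_commute)
  have \<theta>s_int: "\<theta>s \<in> interior (closure \<Theta>)"
    using Theta interior_mono[OF closure_subset] interior_open by blast
  obtain c\<^sub>1 where grad_moment: "0 \<le> c\<^sub>1" "\<And>T. T \<in> TT \<Longrightarrow>
      (\<integral>\<^sup>+\<omega>. ennreal (spec_norm (aT \<alpha> T) powr m1 * norm (grad (H T \<omega>) \<theta>s) powr m1) \<partial>M) \<le> ennreal c\<^sub>1"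
    using ennreal_le_of_SUP_less_top[OF A12_ii] by blast
  obtain c\<^sub>2 where hess_moment: "0 \<le> c\<^sub>2" "\<And>T. T \<in> TT \<Longrightarrow>
      (\<integral>\<^sup>+\<omega>. ennreal (spec_norm (aT \<alpha> T) powr (2 * m1))
         * enn_powr (SUP \<theta>\<in>B. ennreal (norm (hess (H T \<omega>) \<theta>))) m1 \<partial>M) \<le> ennreal c\<^sub>2"
    using ennreal_le_of_SUP_less_top[OF A12_iii] unfolding B_def by blast
  define K where "K = 2 powr m1 * (c\<^sub>1 + c\<^sub>2) + 1"
  have K: "0 < K"
    using grad_moment(1) hess_moment(1) unfolding K_def by (intro add_nonneg_pos mult_nonneg_nonneg) auto
  show ?thesis
  proof (rule exI[of _ R0], rule conjI[OF R0(1)], rule exI[of _ K], rule conjI[OF K], intro ballI impI)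
    fix T assume T: "T \<in> TT" and A1: "spec_norm (aT \<alpha> T) \<le> 1"
    define X where "X = (spec_norm (aT \<alpha> T) powr (-(\<eta> * (2 - q)))
        * sub_spec_norm (GT q \<theta>s \<alpha> \<xi> T) (J0 \<theta>s) powr q) powr m1"
    have "cT M q \<eta> \<Theta> \<theta>s \<alpha> \<xi> H T m1 R0 \<le> ennreal (2 powr m1 * (c\<^sub>1 + c\<^sub>2) * X)"
      unfolding X_def
      by (rule cT_le) (use H_meas[OF T] \<theta>s_int A12_i[OF T, folded B_def] ball_B spec_norm_aT_pos
          alpha_nz[OF T] A1 R0 q eta m1 grad_moment hess_moment T in auto)
    also have "\<dots> \<le> ennreal (K * X)"
      by (intro ennreal_leI mult_right_mono) (auto simp: K_def X_def)
    finally show "cT M q \<eta> \<Theta> \<theta>s \<alpha> \<xi> H T m1 R0 \<le> ennreal (K * X)" .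
  qed
qed

end
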